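(* Let $Q:\mathbb{R}\to\mathbb{C}$ be a bounded function ($Q\in L^\infty(\mathbb{R})$, evaluated pointwise) and let $(u(z))_{z\in\mathbb{Z}}\subset\mathbb{C}$ with $u(z)=0$ for all $z<0$ and $u(0)\neq0$. Let $R(\xi):=\sum_{z\in\mathbb{Z}}Q(\xi-z)u(z)$ and let $\gamma\{\ddot u_+\}$ be as in the context. Then $$Q(\xi)=\frac{1}{u(0)}\sum_{z\in\mathbb{Z}}R(\xi-z)\,\gamma\{\ddot u_+\}(z)\qquad(\xi\in\mathbb{R})$$ whenever one of the following holds: (1) there exists $\xi_0\in\mathbb{R}$ with $Q(\xi)=0$ for all $\xi<\xi_0$; (2) $Q$ is non-decreasing on $\mathbb{R}$, $\sum_{z\in\mathbb{Z}}|u(z)|<\infty$, and $\sum_{z\in\mathbb{Z}}|\gamma\{\ddot u_+\}(z)\,Q(\xi-z)|<\infty$ for each $\xi\in\mathbb{R}$.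
   Context: Define $\ddot u_+(z):=\delta_{z,0}-\frac{u(z)}{u(0)}$ for $z\in\mathbb{Z}$ (where $\delta_{z,0}=1$ if $z=0$, else $0$). Discrete convolution powers: $\ddot u_+^{*0}(z):=\delta_{z,0}$ and $\ddot u_+^{*j}(z):=\sum_{y\in\mathbb{Z}}\ddot u_+(z-y)\ddot u_+^{*(j-1)}(y)$ for $j\ge1$ (finite sums since $\ddot u_+$ vanishes on negative integers). Let $\gamma\{\ddot u_+\}(z):=\sum_{j=0}^{z}\ddot u_+^{*j}(z)$ for $z\in\mathbb{Z}$ (empty sum $=0$, so $\gamma\{\ddot u_+\}(z)=0$ for $z<0$). *)

theory Defs
  imports "HOL-Analysis.Analysis"
begin

definition uddot :: "(int \<Rightarrow> complex) \<Rightarrow> int \<Rightarrow> complex" where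
  "uddot u z = (if z = 0 then 1 else 0) - u z / u 0"

fun conv_pow :: "(int \<Rightarrow> complex) \<Rightarrow> nat \<Rightarrow> int \<Rightarrow> complex" where
  "conv_pow f 0 z = (if z = 0 then 1 else 0)"
| "conv_pow f (Suc j) z = (\<Sum>\<^sub>\<infinity>y\<in>(UNIV::int set). f (z - y) * conv_pow f j y)"

definition gam :: "(int \<Rightarrow> complex) \<Rightarrow> int \<Rightarrow> complex" where
  "gam f z = (if z < 0 then 0 else (\<Sum>j\<in>{0..nat z}. conv_pow f j z))"

definition Rfun :: "(real \<Rightarrow> complex) \<Rightarrow> (int \<Rightarrow> complex) \<Rightarrow> real \<Rightarrow> complex" where
  "Rfun Q u \<xi> = (\<Sum>\<^sub>\<infinity>z\<in>(UNIV::int set). Q (\<xi> - of_int z) * u z)"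

end

theory Submission
  imports Defs
begin

text \<open>Write \<open>f = \<delta> - u / u(0)\<close> and \<open>\<gamma> = \<gamma>{f}\<close>. Since \<open>f\<close> vanishes on \<open>z \<le> 0\<close>, the
  Neumann series \<open>\<gamma> = \<Sum>\<^sub>j f\<^sup>*\<^sup>j\<close> is locally finite and inverts \<open>\<delta> - f\<close> under
  convolution, i.e. \<open>u * \<gamma> = u(0) \<delta>\<close>. Expanding \<open>R\<close>, the series \<open>\<Sum>\<^sub>z R(\<xi> - z) \<gamma>(z)\<close>
  becomes a double series over \<open>(z, z')\<close> with terms \<open>Q(\<xi> - z - z') u(z') \<gamma>(z)\<close>;
  substituting \<open>w = z + z'\<close> and summing over \<open>z\<close> first turns it into
  \<open>\<Sum>\<^sub>w Q(\<xi> - w) (u * \<gamma>)(w) = u(0) Q(\<xi>)\<close>. This is legitimate as soon as the double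
  series converges absolutely. In case (1) it has only finitely many non-zero terms. In case (2)
  its terms are dominated by \<open>a(z) \<bar>u(z')\<bar>\<close>: if \<open>Q \<ge> 0\<close>, monotonicity gives
  \<open>\<bar>Q(\<xi> - z - z')\<bar> \<le> \<bar>Q(\<xi> - z)\<bar>\<close> for \<open>z' \<ge> 0\<close>, so \<open>a(z) = \<bar>\<gamma>(z) Q(\<xi> - z)\<bar>\<close> works;
  otherwise \<open>\<bar>Q\<bar>\<close> is bounded away from \<open>0\<close> on a left half-line, which forces \<open>\<gamma>\<close> itself to
  be absolutely summable, and \<open>a = (sup \<bar>Q\<bar>) \<bar>\<gamma>\<bar>\<close> works.\<close>

lemma conv_pow_eq_0_below:
  assumes f: "\<forall>z\<le>0. f z = 0" and "y < int j"
  shows "conv_pow f j y = 0"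
  using assms(2)
proof (induction j arbitrary: y)
  case (Suc j)
  have "f (y - x) * conv_pow f j x = 0" for x
    using Suc f by (cases "x < int j") auto
  then show ?case by (simp add: infsum_0)
qed simp

lemma conv_pow_Suc_eq_sum:
  assumes f: "\<forall>z\<le>0. f z = 0"
  shows "conv_pow f (Suc j) z = (\<Sum>y\<in>{0..z}. f (z - y) * conv_pow f j y)"
proof -
  have "f (z - y) * conv_pow f j y = 0" if "y \<notin> {0..z}" for y
    using that f conv_pow_eq_0_below[OF f, where y=y and j=j] by auto
  then have "(\<Sum>\<^sub>\<infinity>y. f (z - y) * conv_pow f j y) = (\<Sum>\<^sub>\<infinity>y\<in>{0..z}. f (z - y) * conv_pow f j y)"
    by (intro infsum_cong_neutral) auto
  then show ?thesis by simp
qed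

lemma gam_eq_sum_conv_pow:
  assumes f: "\<forall>z\<le>0. f z = 0" and "z \<le> int N"
  shows "gam f z = (\<Sum>j\<le>N. conv_pow f j z)"
proof (cases "z < 0")
  case True
  then show ?thesis by (simp add: gam_def conv_pow_eq_0_below[OF f])
next
  case False
  with assms(2) have "(\<Sum>j\<le>N. conv_pow f j z) = (\<Sum>j\<in>{0..nat z}. conv_pow f j z)"
    by (intro sum.mono_neutral_right) (auto intro!: conv_pow_eq_0_below[OF f])
  with False show ?thesis by (simp add: gam_def)
qed

lemma gam_Neumann:
  assumes f: "\<forall>z\<le>0. f z = 0" and "w \<ge> 0"
  shows "gam f w = (if w = 0 then 1 else 0) + (\<Sum>z\<in>{0..w}. f (w - z) * gam f z)"
proof -
  define N where "N = nat w"
  have "(\<Sum>z\<in>{0..w}. f (w - z) * gam f z) = (\<Sum>z\<in>{0..w}. f (w - z) * (\<Sum>j\<le>N. conv_pow f j z))"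
    by (intro sum.cong refl) (simp add: N_def gam_eq_sum_conv_pow[OF f])
  also have "\<dots> = (\<Sum>j\<le>N. conv_pow f (Suc j) w)"
    by (simp del: conv_pow.simps add: conv_pow_Suc_eq_sum[OF f] sum_distrib_left sum.swap[of _ "{0..w}"])
  also have "\<dots> = (\<Sum>j\<le>Suc N. conv_pow f j w) - conv_pow f 0 w"
    by (simp only: sum.atMost_Suc_shift) simp
  also have "\<dots> = gam f w - conv_pow f 0 w"
    using assms(2) gam_eq_sum_conv_pow[OF f, where z=w and N="Suc N"] by (simp add: N_def)
  finally show ?thesis by simp
qed

lemma uddot_eq_0_nonpos:
  assumes "\<forall>z<0. u z = 0" and "u 0 \<noteq> 0"
  shows "\<forall>z\<le>0. uddot u z = 0"
  using assms by (auto simp: uddot_def order.order_iff_strict)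

lemma infsum_convolution_gam_uddot:
  assumes u_neg: "\<forall>z<0. u z = 0" and u0: "u 0 \<noteq> 0"
  shows "(\<Sum>\<^sub>\<infinity>z. u (w - z) * gam (uddot u) z) = (if w = 0 then u 0 else 0)"
proof -
  let ?f = "uddot u"
  have "u (w - z) * gam ?f z = 0" if "z \<notin> {0..w}" for z
    using that u_neg by (auto simp: gam_def)
  then have "(\<Sum>\<^sub>\<infinity>z. u (w - z) * gam ?f z) = (\<Sum>z\<in>{0..w}. u (w - z) * gam ?f z)"
    by (subst infsum_cong_neutral[where T="{0..w}"]) auto
  also have "\<dots> = (if w = 0 then u 0 else 0)"
  proof (cases "w < 0")
    case False
    have u_eq: "u x = u 0 * ((if x = 0 then 1 else 0) - ?f x)" for x
      using u0 by (simp add: uddot_def field_simps)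
    have delta: "(\<Sum>z\<in>{0..w}. (if w - z = 0 then 1 else 0) * gam ?f z) = gam ?f w"
    proof -
      have "(\<Sum>z\<in>{0..w}. (if w - z = 0 then 1 else 0) * gam ?f z) = (\<Sum>z\<in>{0..w}. if z = w then gam ?f z else 0)"
        by (intro sum.cong) auto
      then show ?thesis
        using False by (simp add: sum.delta')
    qed
    have "(\<Sum>z\<in>{0..w}. u (w - z) * gam ?f z)
        = u 0 * ((\<Sum>z\<in>{0..w}. (if w - z = 0 then 1 else 0) * gam ?f z) - (\<Sum>z\<in>{0..w}. ?f (w - z) * gam ?f z))"
      by (subst u_eq) (simp add: sum_distrib_left algebra_simps sum_subtractf)
    also have "\<dots> = u 0 * (gam ?f w - (\<Sum>z\<in>{0..w}. ?f (w - z) * gam ?f z))"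
      by (simp only: delta)
    also have "\<dots> = (if w = 0 then u 0 else 0)"
      using gam_Neumann[OF uddot_eq_0_nonpos[OF u_neg u0], of w] False by simp
    finally show ?thesis .
  qed simp
  finally show ?thesis .
qed

lemma infsum_Rfun_convolution_inverse:
  fixes Q :: "real \<Rightarrow> complex" and u g :: "int \<Rightarrow> complex"
  assumes inverse: "\<And>w. (\<Sum>\<^sub>\<infinity>z. u (w - z) * g z) = (if w = 0 then c else 0)"
    and summable: "(\<lambda>(z, z'). Q (\<xi> - of_int z - of_int z') * u z' * g z) summable_on UNIV"
  shows "(\<Sum>\<^sub>\<infinity>z. Rfun Q u (\<xi> - of_int z) * g z) = c * Q \<xi>"
proof -
  define F where "F = (\<lambda>(z, z'). Q (\<xi> - of_int z - of_int z') * u z' * g z)"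
  define G where "G = (\<lambda>(w, z). Q (\<xi> - of_int w) * (u (w - z) * g z))"
  have reindex: "(F has_sum s) UNIV \<longleftrightarrow> (G has_sum s) UNIV" for s
    by (rule has_sum_reindex_bij_witness[where i="\<lambda>(w, z). (z, w - z)" and j="\<lambda>(z, z'). (z + z', z)"])
      (auto simp: F_def G_def algebra_simps)
  have F: "F summable_on UNIV" and G: "G summable_on UNIV"
    using summable reindex by (auto simp: F_def summable_on_def)
  have "(\<Sum>\<^sub>\<infinity>z. Rfun Q u (\<xi> - of_int z) * g z) = (\<Sum>\<^sub>\<infinity>z. \<Sum>\<^sub>\<infinity>z'. F (z, z'))"
    by (simp add: Rfun_def F_def infsum_cmult_left')
  also have "\<dots> = infsum F UNIV"
    using infsum_Sigma'_banach[of "\<lambda>z z'. F (z, z')"] F by simp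
  also have "\<dots> = infsum G UNIV"
    using reindex F by (metis has_sum_infsum infsumI)
  also have "\<dots> = (\<Sum>\<^sub>\<infinity>w. \<Sum>\<^sub>\<infinity>z. G (w, z))"
    using infsum_Sigma'_banach[of "\<lambda>w z. G (w, z)"] G by simp
  also have "\<dots> = (\<Sum>\<^sub>\<infinity>w::int. if w = 0 then c * Q \<xi> else 0)"
    by (rule infsum_cong) (simp add: G_def infsum_cmult_right' inverse)
  also have "\<dots> = c * Q \<xi>"
    by (subst infsum_cong_neutral[where T="{0}"]) auto
  finally show ?thesis .
qed

lemma summable_on_Times_dominated:
  fixes F :: "'a \<times> 'b \<Rightarrow> 'c::banach" and a :: "'a \<Rightarrow> real" and b :: "'b \<Rightarrow> real"
  assumes a: "a summable_on A" and b: "b summable_on B"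
    and nonneg: "\<And>x. x \<in> A \<Longrightarrow> 0 \<le> a x" "\<And>y. y \<in> B \<Longrightarrow> 0 \<le> b y"
    and bound: "\<And>x y. x \<in> A \<Longrightarrow> y \<in> B \<Longrightarrow> norm (F (x, y)) \<le> a x * b y"
  shows "F summable_on A \<times> B"
proof -
  have "(\<lambda>(x, y). a x * b y) summable_on A \<times> B"
  proof (rule summable_on_SigmaI[where g="\<lambda>x. a x * infsum b B"])
    show "((\<lambda>y. case (x, y) of (x, y) \<Rightarrow> a x * b y) has_sum a x * infsum b B) B" for x
      using has_sum_cmult_right[OF has_sum_infsum[OF b]] by simp
    show "(\<lambda>x. a x * infsum b B) summable_on A"
      using summable_on_cmult_left[OF a] by simp
  qed (use nonneg in auto)
  then have "(\<lambda>p. norm (F p)) summable_on A \<times> B"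
    by (rule summable_on_comparison_test) (use bound in auto)
  then show ?thesis
    by (rule abs_summable_summable)
qed

lemma summable_on_double_bounded_support:
  fixes Q :: "real \<Rightarrow> complex" and u g :: "int \<Rightarrow> complex"
  assumes Q_left: "\<forall>x<x0. Q x = 0" and u_neg: "\<forall>z<0. u z = 0" and g_neg: "\<forall>z<0. g z = 0"
  shows "(\<lambda>(z, z'). Q (\<xi> - of_int z - of_int z') * u z' * g z) summable_on UNIV"
proof (rule finite_nonzero_values_imp_summable_on)
  define M where "M = \<lceil>\<xi> - x0\<rceil>"
  have box: "(z, z') \<in> {0..M} \<times> {0..M}" if "Q (\<xi> - of_int z - of_int z') * u z' * g z \<noteq> 0" for z z'
  proof -
    have "0 \<le> z" "0 \<le> z'" "x0 \<le> \<xi> - of_int z - of_int z'"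
      using that u_neg g_neg Q_left by (auto simp: not_less)
    moreover have "\<xi> - x0 \<le> of_int M"
      by (simp add: M_def)
    ultimately show ?thesis
      by simp
  qed
  show "finite {p \<in> UNIV. (case p of (z, z') \<Rightarrow> Q (\<xi> - of_int z - of_int z') * u z' * g z) \<noteq> 0}"
    by (rule finite_subset[of _ "{0..M} \<times> {0..M}"]) (use box in auto)
qed

lemma abs_summable_if_weighted_bounded_below:
  fixes Q :: "real \<Rightarrow> complex" and g :: "int \<Rightarrow> complex"
  assumes g_neg: "\<forall>z<0. g z = 0" and c: "c > 0" and below: "\<And>x. x \<le> x0 \<Longrightarrow> c \<le> norm (Q x)"
    and weighted: "(\<lambda>z. norm (g z * Q (\<xi> - of_int z))) summable_on UNIV"
  shows "(\<lambda>z. norm (g z)) summable_on UNIV"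
proof -
  define S where "S = {z. \<xi> - of_int z \<le> x0}"
  have "(\<lambda>z. norm (g z * Q (\<xi> - of_int z)) / c) summable_on S"
    using summable_on_cmult_left[OF summable_on_subset[OF weighted], of S "1 / c"] by simp
  then have on_S: "(\<lambda>z. norm (g z)) summable_on S"
  proof (rule summable_on_comparison_test)
    fix z assume "z \<in> S"
    then have "norm (g z) * c \<le> norm (g z * Q (\<xi> - of_int z))"
      using below by (simp add: S_def norm_mult mult_left_mono)
    then show "norm (g z) \<le> norm (g z * Q (\<xi> - of_int z)) / c"
      using c by (simp add: pos_le_divide_eq)
  qed simp
  have window: "z \<in> {0..\<lceil>\<xi> - x0\<rceil>}" if "z \<in> - S" and "g z \<noteq> 0" for z
  proof -
    have "0 \<le> z"
      using that(2) g_neg by (meson not_le)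
    moreover have "of_int z < \<xi> - x0"
      using that(1) by (simp add: S_def)
    then have "z \<le> \<lceil>\<xi> - x0\<rceil>"
      by linarith
    ultimately show ?thesis
      by simp
  qed
  have "finite {z \<in> - S. norm (g z) \<noteq> 0}"
    by (rule finite_subset[of _ "{0..\<lceil>\<xi> - x0\<rceil>}"]) (use window in auto)
  then have "(\<lambda>z. norm (g z)) summable_on - S"
    by (rule finite_nonzero_values_imp_summable_on)
  from summable_on_Un_disjoint[OF on_S this] show ?thesis
    by simp
qed

lemma summable_on_double_monotone:
  fixes Q :: "real \<Rightarrow> complex" and u g :: "int \<Rightarrow> complex"
  assumes Q_bounded: "bounded (range Q)" and Q_real: "\<forall>x. Q x \<in> \<real>" and Q_mono: "mono (\<lambda>x. Re (Q x))"
    and u_neg: "\<forall>z<0. u z = 0" and g_neg: "\<forall>z<0. g z = 0"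
    and u_summable: "(\<lambda>z. norm (u z)) summable_on UNIV"
    and weighted: "(\<lambda>z. norm (g z * Q (\<xi> - of_int z))) summable_on UNIV"
  shows "(\<lambda>(z, z'). Q (\<xi> - of_int z - of_int z') * u z' * g z) summable_on UNIV"
proof -
  have norm_Q: "norm (Q x) = \<bar>Re (Q x)\<bar>" for x
    using Q_real by (metis Reals_cases Re_complex_of_real norm_of_real)
  obtain a where a: "a summable_on UNIV" "\<And>z. 0 \<le> a z"
    and bound: "\<And>z z'. norm (Q (\<xi> - of_int z - of_int z') * u z' * g z) \<le> a z * norm (u z')"
  proof (cases "\<forall>x. 0 \<le> Re (Q x)")
    case True
    have "norm (Q (\<xi> - of_int z - of_int z') * u z' * g z) \<le> norm (g z * Q (\<xi> - of_int z)) * norm (u z')"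
      for z z'
    proof (cases "z' < 0")
      case False
      then have "Re (Q (\<xi> - of_int z - of_int z')) \<le> Re (Q (\<xi> - of_int z))"
        by (intro monoD[OF Q_mono]) simp
      then have "norm (Q (\<xi> - of_int z - of_int z')) \<le> norm (Q (\<xi> - of_int z))"
        using True by (simp add: norm_Q)
      then show ?thesis
        by (simp add: norm_mult mult_right_mono mult_left_mono algebra_simps)
    qed (use u_neg in simp)
    with weighted show thesis
      by (intro that[of "\<lambda>z. norm (g z * Q (\<xi> - of_int z))"]) auto
  next
    case False
    then obtain x0 where x0: "Re (Q x0) < 0"
      by (auto simp: not_le)
    have "- Re (Q x0) \<le> norm (Q x)" if "x \<le> x0" for x
      using monoD[OF Q_mono that] x0 by (simp add: norm_Q)
    with x0 have g_summable: "(\<lambda>z. norm (g z)) summable_on UNIV"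
      by (intro abs_summable_if_weighted_bounded_below[OF g_neg _ _ weighted]) auto
    obtain B where B: "\<And>x. norm (Q x) \<le> B"
      using Q_bounded by (auto simp: bounded_iff)
    have "norm (Q (\<xi> - of_int z - of_int z') * u z' * g z) \<le> B * norm (g z) * norm (u z')" for z z'
      using mult_right_mono[OF B[of "\<xi> - of_int z - of_int z'"], of "norm (u z') * norm (g z)"]
      by (simp add: norm_mult algebra_simps)
    moreover have "0 \<le> B"
      using B[of 0] norm_ge_zero order_trans by blast
    ultimately show thesis
      using g_summable by (intro that[of "\<lambda>z. B * norm (g z)"] summable_on_cmult_right) auto
  qed
  have "(\<lambda>(z, z'). Q (\<xi> - of_int z - of_int z') * u z' * g z) summable_on UNIV \<times> UNIV"
    by (rule summable_on_Times_dominated[OF a(1) u_summable]) (use a(2) bound in auto)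
  then show ?thesis
    by simp
qed

theorem theorem2:
  fixes Q :: "real \<Rightarrow> complex" and u :: "int \<Rightarrow> complex"
  assumes Qbdd: "bounded (range Q)"
    and u_neg: "\<forall>z<0. u z = 0"
    and u0: "u 0 \<noteq> 0"
    and cases: "(\<exists>\<xi>0. \<forall>\<xi><\<xi>0. Q \<xi> = 0)
      \<or> ((\<forall>x. Q x \<in> \<real>) \<and> mono (\<lambda>x. Re (Q x))
         \<and> (\<lambda>z. norm (u z)) summable_on (UNIV::int set)
         \<and> (\<forall>\<xi>. (\<lambda>z. norm (gam (uddot u) z * Q (\<xi> - of_int z))) summable_on (UNIV::int set)))"
  shows "\<forall>\<xi>. Q \<xi> = (1 / u 0) * (\<Sum>\<^sub>\<infinity>z\<in>(UNIV::int set). Rfun Q u (\<xi> - of_int z) * gam (uddot u) z)"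
proof
  fix \<xi> :: real
  have gam_neg: "\<forall>z<0. gam (uddot u) z = 0"
    by (simp add: gam_def)
  from cases have "(\<lambda>(z, z'). Q (\<xi> - of_int z - of_int z') * u z' * gam (uddot u) z) summable_on UNIV"
    using summable_on_double_bounded_support[OF _ u_neg gam_neg]
      summable_on_double_monotone[OF Qbdd _ _ u_neg gam_neg]
    by blast
  then have "(\<Sum>\<^sub>\<infinity>z. Rfun Q u (\<xi> - of_int z) * gam (uddot u) z) = u 0 * Q \<xi>"
    using infsum_Rfun_convolution_inverse infsum_convolution_gam_uddot[OF u_neg u0] by blast
  with u0 show "Q \<xi> = (1 / u 0) * (\<Sum>\<^sub>\<infinity>z\<in>(UNIV::int set). Rfun Q u (\<xi> - of_int z) * gam (uddot u) z)"
    by simp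
qed

end
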